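(* Let $n\in\mathbb{N}$. The bounded invertible operator $\Phi:F\to F$, $\Phi\xi=(d_m/d_{m+1})\xi$ for $\xi\in E_m$, belongs to the Toeplitz algebra $\mathcal{T}$.
   Context: Let $L_n\subseteq(\mathbb{C}^2)^{\otimes n}$ be the symmetric tensors and $\rho_n$ the restriction to $L_n$ of the $n$-fold tensor power of the fundamental representation of $SU(2)$; $D_2\subseteq L_n\otimes L_n$ is the subspace of $\rho_n\otimes\rho_n$-invariant vectors. For $m\ge2$, $E_m=\big(\sum_{i=1}^{m-1}L_n^{\otimes(i-1)}\otimes D_2\otimes L_n^{\otimes(m-i-1)}\big)^\perp\subseteq L_n^{\otimes m}$, $E_1=L_n$, $E_0=\mathbb{C}$; $\iota_{k,m}:E_{k+m}\to E_k\otimes E_m$ are the inclusions induced by $L_n^{\otimes(k+m)}=L_n^{\otimes k}\otimes L_n^{\otimes m}$. $F=\bigoplus_{m\ge0}E_m$ (Hilbert direct sum); for $\xi\in E_k$, $T_\xi\zeta=\iota_{k,m}^*(\xi\otimes\zeta)$ for $\zeta\in E_m$; $\mathcal{T}$ is the unital $C^*$-subalgebra of $\mathcal{B}(F)$ generated by all $T_\xi$. Integers: $d_0=1$, $d_1=n+1$, $d_m=(n+1)d_{m-1}-d_{m-2}$. *)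

theory Defs
  imports Complex_Main "HOL-Combinatorics.Permutations"
begin

(* Vectors of (C^2)^{\<otimes>k} are modelled as functions on bool lists (words) of
   length k, vanishing on words of other lengths; the standard basis of C^2 is
   indexed by False (e_0) and True (e_1). *)

type_synonym vec = "bool list \<Rightarrow> complex"
type_synonym fvec = "nat \<Rightarrow> vec"   (* element of F: m-th component in E_m *)

definition words :: "nat \<Rightarrow> bool list set" where
  "words k = {w. length w = k}"

definition vecs :: "nat \<Rightarrow> vec set" where
  "vecs k = {v. \<forall>w. length w \<noteq> k \<longrightarrow> v w = 0}"

definition inp :: "nat \<Rightarrow> vec \<Rightarrow> vec \<Rightarrow> complex" where
  "inp k u v = (\<Sum>w\<in>words k. u w * cnj (v w))"

definition vnorm2 :: "nat \<Rightarrow> vec \<Rightarrow> real" where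
  "vnorm2 k v = (\<Sum>w\<in>words k. (cmod (v w))^2)"

definition permw :: "(nat \<Rightarrow> nat) \<Rightarrow> bool list \<Rightarrow> bool list" where
  "permw \<sigma> w = map (\<lambda>i. w ! \<sigma> i) [0..<length w]"

definition Lsym :: "nat \<Rightarrow> vec set" where
  "Lsym n = {v \<in> vecs n. \<forall>\<sigma>. \<sigma> permutes {..<n} \<longrightarrow>
                (\<forall>w. length w = n \<longrightarrow> v (permw \<sigma> w) = v w)}"

(* elementary tensor u \<otimes> v, u \<in> (C^2)^{\<otimes>a} *)
definition tens :: "nat \<Rightarrow> vec \<Rightarrow> vec \<Rightarrow> vec" where
  "tens a u v = (\<lambda>w. u (take a w) * v (drop a w))"

definition tensp :: "nat \<Rightarrow> vec set \<Rightarrow> vec set \<Rightarrow> vec set" where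
  "tensp a S T = {x. \<exists>(k::nat) u v. (\<forall>i<k. u i \<in> S \<and> v i \<in> T) \<and>
                        x = (\<lambda>w. \<Sum>i<k. tens a (u i) (v i) w)}"

definition scalars :: "vec set" where
  "scalars = {v. \<exists>c. v = (\<lambda>w. if w = [] then c else 0)}"

fun Lpow :: "nat \<Rightarrow> nat \<Rightarrow> vec set" where
  "Lpow n 0 = scalars"
| "Lpow n (Suc m) = tensp n (Lsym n) (Lpow n m)"

definition SU2 :: "(bool \<Rightarrow> bool \<Rightarrow> complex) \<Rightarrow> bool" where
  "SU2 U \<longleftrightarrow> (\<forall>i j. (\<Sum>k\<in>UNIV. cnj (U k i) * U k j) = (if i = j then 1 else 0))
             \<and> U False False * U True True - U False True * U True False = 1"

definition tpow_act :: "nat \<Rightarrow> (bool \<Rightarrow> bool \<Rightarrow> complex) \<Rightarrow> vec \<Rightarrow> vec" where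
  "tpow_act k U v = (\<lambda>w. if length w = k
        then (\<Sum>w'\<in>words k. (\<Prod>i<k. U (w ! i) (w' ! i)) * v w') else 0)"

definition D2 :: "nat \<Rightarrow> vec set" where
  "D2 n = {v \<in> tensp n (Lsym n) (Lsym n). \<forall>U. SU2 U \<longrightarrow> tpow_act (2*n) U v = v}"

definition sumsp :: "nat set \<Rightarrow> (nat \<Rightarrow> vec set) \<Rightarrow> vec set" where
  "sumsp I V = {x. \<exists>y. (\<forall>i\<in>I. y i \<in> V i) \<and> x = (\<lambda>w. \<Sum>i\<in>I. y i w)}"

definition E :: "nat \<Rightarrow> nat \<Rightarrow> vec set" where
  "E n m = (if m = 0 then scalars else if m = 1 then Lsym n else
     {v \<in> Lpow n m. \<forall>x \<in> sumsp {1..m-1}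
          (\<lambda>i. tensp (n*(i-1)) (Lpow n (i-1)) (tensp (2*n) (D2 n) (Lpow n (m-i-1)))).
        inp (n*m) v x = 0})"

(* adjoint of the inclusion of the subspace S: orthogonal projection onto S *)
definition proj :: "nat \<Rightarrow> vec set \<Rightarrow> vec \<Rightarrow> vec" where
  "proj k S x = (THE p. p \<in> S \<and> (\<forall>y\<in>S. inp k p y = inp k x y))"

definition Fock :: "nat \<Rightarrow> fvec set" where
  "Fock n = {f. (\<forall>m. f m \<in> E n m) \<and> summable (\<lambda>m. vnorm2 (n*m) (f m))}"

definition Finp :: "nat \<Rightarrow> fvec \<Rightarrow> fvec \<Rightarrow> complex" where
  "Finp n f g = (\<Sum>m. inp (n*m) (f m) (g m))"

definition Fnorm :: "nat \<Rightarrow> fvec \<Rightarrow> real" where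
  "Fnorm n f = sqrt (\<Sum>m. vnorm2 (n*m) (f m))"

(* T_\<xi> for \<xi> \<in> E_k: maps \<zeta> \<in> E_m to \<iota>_{k,m}^*(\<xi> \<otimes> \<zeta>) \<in> E_{k+m} *)
definition Tx :: "nat \<Rightarrow> nat \<Rightarrow> vec \<Rightarrow> fvec \<Rightarrow> fvec" where
  "Tx n k \<xi> = (\<lambda>f m. if m < k then (\<lambda>w. 0)
                   else proj (n*m) (E n m) (tens (n*k) \<xi> (f (m-k))))"

definition opnorm :: "nat \<Rightarrow> (fvec \<Rightarrow> fvec) \<Rightarrow> real" where
  "opnorm n A = Sup {Fnorm n (A f) | f. f \<in> Fock n \<and> Fnorm n f \<le> 1}"

definition bounded_op :: "nat \<Rightarrow> (fvec \<Rightarrow> fvec) \<Rightarrow> bool" where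
  "bounded_op n A \<longleftrightarrow> (\<forall>f\<in>Fock n. A f \<in> Fock n) \<and>
      bdd_above {Fnorm n (A f) | f. f \<in> Fock n \<and> Fnorm n f \<le> 1}"

(* the unital C*-subalgebra of B(F) generated by all T_\<xi>:
   smallest set containing 1 and the T_\<xi>, closed under linear combinations,
   products, adjoints and operator-norm limits *)
inductive_set Toep :: "nat \<Rightarrow> (fvec \<Rightarrow> fvec) set" for n where
  unit: "(\<lambda>f. f) \<in> Toep n"
| gen: "\<xi> \<in> E n k \<Longrightarrow> Tx n k \<xi> \<in> Toep n"
| add: "A \<in> Toep n \<Longrightarrow> B \<in> Toep n \<Longrightarrow> (\<lambda>f m w. A f m w + B f m w) \<in> Toep n"
| smult: "A \<in> Toep n \<Longrightarrow> (\<lambda>f m w. c * A f m w) \<in> Toep n"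
| comp: "A \<in> Toep n \<Longrightarrow> B \<in> Toep n \<Longrightarrow> (\<lambda>f. A (B f)) \<in> Toep n"
| adj: "A \<in> Toep n \<Longrightarrow> \<forall>f\<in>Fock n. B f \<in> Fock n \<Longrightarrow>
        \<forall>f\<in>Fock n. \<forall>g\<in>Fock n. Finp n (A f) g = Finp n f (B g) \<Longrightarrow> B \<in> Toep n"
| lim: "\<forall>j. A j \<in> Toep n \<Longrightarrow> bounded_op n B \<Longrightarrow>
        (\<lambda>j. opnorm n (\<lambda>f m w. A j f m w - B f m w)) \<longlonglongrightarrow> 0 \<Longrightarrow> B \<in> Toep n"

fun d :: "nat \<Rightarrow> nat \<Rightarrow> int" where
  "d n 0 = 1"
| "d n (Suc 0) = int n + 1"
| "d n (Suc (Suc m)) = (int n + 1) * d n (Suc m) - d n m"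

definition Phi :: "nat \<Rightarrow> fvec \<Rightarrow> fvec" where
  "Phi n f = (\<lambda>m w. complex_of_real (of_int (d n m) / of_int (d n (Suc m))) * f m w)"

end

theory Submission
  imports Defs "HOL-Analysis.Convex"
begin

text \<open>With \<open>\<xi>\<^sub>u\<close> the orthogonal projection of the basis vector \<open>\<delta>\<^sub>u\<close> onto \<open>L\<^sub>n\<close>, one has
  \<open>\<Sum>\<^sub>u T\<^sub>\<xi>\<^sub>u T\<^sub>\<xi>\<^sub>u\<^sup>* = 1\<close> on \<open>\<Oplus>\<^sub>m\<^sub>\<ge>\<^sub>1 E\<^sub>m\<close>, so \<open>D \<mapsto> \<Sum>\<^sub>u T\<^sub>\<xi>\<^sub>u D T\<^sub>\<xi>\<^sub>u\<^sup>*\<close> shifts the diagonal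
  of a diagonal operator \<open>D\<close> by one step. Starting from the identity, this puts every diagonal
  operator with eventually constant entries into \<open>\<T>\<close>. Cassini's identity
  \<open>d\<^sub>m\<^sub>+\<^sub>1\<^sup>2 - d\<^sub>m d\<^sub>m\<^sub>+\<^sub>2 = 1\<close> makes \<open>r\<^sub>m\<close> increasing and bounded, hence convergent,
  and the truncations of \<open>\<Phi>\<close> to eventually constant diagonals converge to \<open>\<Phi>\<close> in norm.\<close>

section \<open>Orthogonal projections in \<open>(\<complex>\<^sup>2)\<^sup>\<otimes>\<^sup>k\<close>\<close>

lemma finite_words [simp]: "finite (words k)"
proof -
  have "words k = {xs. set xs \<subseteq> (UNIV :: bool set) \<and> length xs = k}"
    by (auto simp: words_def)
  thus ?thesis using finite_lists_length_eq[of "UNIV :: bool set" k] by simp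
qed

lemma in_words [simp]: "w \<in> words k \<longleftrightarrow> length w = k"
  by (simp add: words_def)

lemma vecs_eqI:
  assumes "u \<in> vecs k" "v \<in> vecs k" "\<And>w. length w = k \<Longrightarrow> u w = v w"
  shows "u = v"
proof
  show "u w = v w" for w
    using assms by (cases "length w = k") (auto simp: vecs_def)
qed

lemma inp_cnj: "inp k v u = cnj (inp k u v)"
  by (simp add: inp_def mult.commute)

lemma inp_lin_left: "inp k (\<lambda>w. a * u w + b * v w) y = a * inp k u y + b * inp k v y"
  by (simp add: inp_def sum.distrib sum_distrib_left algebra_simps)

lemma inp_lin_right: "inp k y (\<lambda>w. a * u w + b * v w) = cnj a * inp k y u + cnj b * inp k y v"
  by (simp add: inp_def sum.distrib sum_distrib_left algebra_simps)

lemma inp_zero_left [simp]: "inp k (\<lambda>w. 0) y = 0"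
  by (simp add: inp_def)

lemma inp_zero_right [simp]: "inp k y (\<lambda>w. 0) = 0"
  by (simp add: inp_def)

lemma inp_add_left: "inp k (\<lambda>w. u w + v w) y = inp k u y + inp k v y"
  by (simp add: inp_def sum.distrib algebra_simps)

lemma inp_scale_left: "inp k (\<lambda>w. a * u w) y = a * inp k u y"
  by (simp add: inp_def sum_distrib_left algebra_simps)

lemma inp_diff_left: "inp k (\<lambda>w. u w - v w) y = inp k u y - inp k v y"
  by (simp add: inp_def sum_subtractf algebra_simps)

lemma inp_sum_left:
  "finite I \<Longrightarrow> inp k (\<lambda>w. \<Sum>i\<in>I. c i * x i w) y = (\<Sum>i\<in>I. c i * inp k (x i) y)"
  by (simp add: inp_def sum_distrib_left sum_distrib_right algebra_simps sum.swap[of _ I])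

lemma vnorm2_nonneg: "0 \<le> vnorm2 k v"
  by (simp add: vnorm2_def sum_nonneg)

lemma inp_self: "inp k v v = complex_of_real (vnorm2 k v)"
  unfolding inp_def vnorm2_def of_real_sum
  by (intro sum.cong) (simp_all add: complex_norm_square flip: of_real_power)

lemma inp_self_eq_0:
  assumes "inp k v v = 0" "length w = k"
  shows "v w = 0"
proof -
  have "vnorm2 k v = 0" using assms(1) by (simp add: inp_self)
  then have "\<forall>x\<in>words k. (cmod (v x))^2 = 0"
    unfolding vnorm2_def by (subst sum_nonneg_eq_0_iff[symmetric]) auto
  then show ?thesis using assms(2) by auto
qed

definition lin_subspace :: "nat \<Rightarrow> vec set \<Rightarrow> bool" where
  "lin_subspace k S \<longleftrightarrow> S \<subseteq> vecs k \<and> (\<lambda>w. 0) \<in> S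
     \<and> (\<forall>u\<in>S. \<forall>v\<in>S. (\<lambda>w. u w + v w) \<in> S) \<and> (\<forall>c. \<forall>u\<in>S. (\<lambda>w. c * u w) \<in> S)"

lemma lin_subspaceD:
  assumes "lin_subspace k S"
  shows "S \<subseteq> vecs k" "(\<lambda>w. 0) \<in> S" "u \<in> S \<Longrightarrow> v \<in> S \<Longrightarrow> (\<lambda>w. u w + v w) \<in> S"
    "u \<in> S \<Longrightarrow> (\<lambda>w. c * u w) \<in> S"
  using assms unfolding lin_subspace_def by blast+

lemma lin_subspace_lincomb:
  "lin_subspace k S \<Longrightarrow> u \<in> S \<Longrightarrow> v \<in> S \<Longrightarrow> (\<lambda>w. a * u w + b * v w) \<in> S"
  using lin_subspaceD[of k S] by metis

lemma lin_subspace_diff: "lin_subspace k S \<Longrightarrow> u \<in> S \<Longrightarrow> v \<in> S \<Longrightarrow> (\<lambda>w. u w - v w) \<in> S"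
  using lin_subspace_lincomb[of k S u v 1 "-1"] by simp

lemma lin_subspace_sum:
  assumes S: "lin_subspace k S" and "finite I" "\<forall>i\<in>I. x i \<in> S"
  shows "(\<lambda>w. \<Sum>i\<in>I. c i * x i w) \<in> S"
  using assms(2,3)
proof (induction I rule: finite_induct)
  case empty
  then show ?case using lin_subspaceD(2)[OF S] by simp
next
  case (insert a I)
  then have "(\<lambda>w. c a * x a w + 1 * (\<Sum>i\<in>I. c i * x i w)) \<in> S"
    by (intro lin_subspace_lincomb[OF S]) auto
  then show ?case using insert by simp
qed

lemma lin_subspace_orth: "lin_subspace k S \<Longrightarrow> lin_subspace k {v\<in>S. \<forall>x\<in>X. inp k v x = 0}"
  unfolding lin_subspace_def by (simp add: inp_add_left inp_scale_left subset_iff)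

text \<open>Existence of orthogonal projections, by induction on the support: if \<open>s \<in> S\<close> does not
  vanish at the word \<open>a\<close>, then \<open>S\<close> is the orthogonal sum of \<open>S' = {v\<in>S. v a = 0}\<close> and the line
  spanned by \<open>r = s - P\<^sub>S\<^sub>' s\<close>.\<close>

lemma proj_exists_step:
  assumes S: "lin_subspace k S" and a: "length a = k"
    and proj_S': "\<And>x. \<exists>p\<in>{v\<in>S. v a = 0}. \<forall>y\<in>{v\<in>S. v a = 0}. inp k p y = inp k x y"
  shows "\<exists>p\<in>S. \<forall>y\<in>S. inp k p y = inp k x y"
proof (cases "\<forall>v\<in>S. v a = 0")
  case True
  then show ?thesis using proj_S'[of x] by auto
next
  case False
  define S' where "S' = {v\<in>S. v a = 0}"
  from False obtain s where s: "s \<in> S" "s a \<noteq> 0" by auto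
  obtain ps where ps: "ps \<in> S'" "\<forall>y\<in>S'. inp k ps y = inp k s y" using proj_S' S'_def by blast
  define r where "r = (\<lambda>w. s w - ps w)"
  have r: "r \<in> S" "r a \<noteq> 0" "\<forall>y\<in>S'. inp k r y = 0"
    using lin_subspace_diff[OF S s(1)] ps s by (auto simp: r_def S'_def inp_diff_left)
  have rr: "inp k r r \<noteq> 0" using inp_self_eq_0[OF _ a] r(2) by blast
  obtain px where px: "px \<in> S'" "\<forall>y\<in>S'. inp k px y = inp k x y" using proj_S' S'_def by blast
  define p where "p = (\<lambda>w. 1 * px w + (inp k x r / inp k r r) * r w)"
  have "p \<in> S" unfolding p_def by (rule lin_subspace_lincomb[OF S]) (use px(1) r(1) S'_def in auto)
  moreover have "inp k p y = inp k x y" if y: "y \<in> S" for y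
  proof -
    define t where "t = y a / r a"
    define y' where "y' = (\<lambda>w. 1 * y w + (- t) * r w)"
    have "y' \<in> S'"
      using lin_subspace_lincomb[OF S y r(1), of 1 "-t"] r(2) by (simp add: y'_def t_def S'_def)
    then have "inp k p y' = inp k x y'" "inp k p r = inp k x r"
      using px r(3) rr inp_cnj[of k px r] unfolding p_def inp_lin_left by simp_all
    moreover have y_eq: "y = (\<lambda>w. 1 * y' w + t * r w)" by (simp add: y'_def)
    ultimately show ?thesis by (subst (1 2) y_eq, subst (1 2) inp_lin_right) simp
  qed
  ultimately show ?thesis by blast
qed

lemma proj_exists_supported:
  "finite W \<Longrightarrow> W \<subseteq> words k \<Longrightarrow> lin_subspace k S \<Longrightarrow> \<forall>v\<in>S. \<forall>w. w \<notin> W \<longrightarrow> v w = 0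
    \<Longrightarrow> \<exists>p\<in>S. \<forall>y\<in>S. inp k p y = inp k x y"
proof (induction W arbitrary: S x rule: finite_induct)
  case empty
  then have "S = {\<lambda>w. 0}" using lin_subspaceD(2)[OF empty(2)] by auto
  then show ?case by simp
next
  case (insert a W)
  have "lin_subspace k {v\<in>S. v a = 0}"
    using insert(5) unfolding lin_subspace_def by auto
  moreover have "\<forall>v\<in>{v\<in>S. v a = 0}. \<forall>w. w \<notin> W \<longrightarrow> v w = 0"
    using insert(6) by auto
  ultimately have "\<exists>p\<in>{v\<in>S. v a = 0}. \<forall>y\<in>{v\<in>S. v a = 0}. inp k p y = inp k z y" for z
    using insert(3) insert(4) by blast
  moreover have "length a = k" using insert(4) by simp
  ultimately show ?case using proj_exists_step[OF insert(5)] by blast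
qed

lemma proj_exists:
  assumes S: "lin_subspace k S"
  shows "\<exists>p\<in>S. \<forall>y\<in>S. inp k p y = inp k x y"
proof -
  have "\<forall>v\<in>S. \<forall>w. w \<notin> words k \<longrightarrow> v w = 0"
    using lin_subspaceD(1)[OF S] by (auto simp: vecs_def)
  then show ?thesis by (rule proj_exists_supported[OF finite_words subset_refl S])
qed

lemma proj_unique:
  assumes S: "lin_subspace k S" and "p \<in> S" "\<forall>y\<in>S. inp k p y = inp k x y"
    and "q \<in> S" "\<forall>y\<in>S. inp k q y = inp k x y"
  shows "p = q"
proof (rule vecs_eqI)
  show "p \<in> vecs k" "q \<in> vecs k" using lin_subspaceD(1)[OF S] assms(2,4) by auto
  have "(\<lambda>w. p w - q w) \<in> S" using lin_subspace_diff[OF S] assms(2,4) .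
  then have "inp k (\<lambda>w. p w - q w) (\<lambda>w. p w - q w) = 0"
    using assms(3,5) by (simp add: inp_diff_left)
  then show "p w = q w" if "length w = k" for w
    using inp_self_eq_0[OF _ that, of "\<lambda>w. p w - q w"] by simp
qed

lemma proj_char:
  assumes S: "lin_subspace k S"
  shows "proj k S x \<in> S \<and> (\<forall>y\<in>S. inp k (proj k S x) y = inp k x y)"
proof -
  obtain p where p: "p \<in> S" "\<forall>y\<in>S. inp k p y = inp k x y" using proj_exists[OF S] by blast
  have "proj k S x = p"
    unfolding proj_def
  proof (rule the_equality)
    show "p \<in> S \<and> (\<forall>y\<in>S. inp k p y = inp k x y)" using p by simp
    show "q = p" if "q \<in> S \<and> (\<forall>y\<in>S. inp k q y = inp k x y)" for q
      using proj_unique[OF S _ _ p] that by blast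
  qed
  then show ?thesis using p by simp
qed

lemma proj_in: "lin_subspace k S \<Longrightarrow> proj k S x \<in> S"
  using proj_char by blast

lemma proj_inp: "lin_subspace k S \<Longrightarrow> y \<in> S \<Longrightarrow> inp k (proj k S x) y = inp k x y"
  using proj_char by blast

lemma proj_eqI:
  "lin_subspace k S \<Longrightarrow> p \<in> S \<Longrightarrow> \<forall>y\<in>S. inp k p y = inp k x y \<Longrightarrow> proj k S x = p"
  using proj_unique proj_in proj_inp by blast

lemma proj_id: "lin_subspace k S \<Longrightarrow> x \<in> S \<Longrightarrow> proj k S x = x"
  by (rule proj_eqI) auto

lemma proj_sum:
  assumes S: "lin_subspace k S" and I: "finite I"
  shows "proj k S (\<lambda>w. \<Sum>i\<in>I. c i * x i w) = (\<lambda>w. \<Sum>i\<in>I. c i * proj k S (x i) w)"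
  using I by (intro proj_eqI[OF S] lin_subspace_sum[OF S])
    (auto simp: inp_sum_left proj_in[OF S] proj_inp[OF S])

lemma proj_scale: "lin_subspace k S \<Longrightarrow> proj k S (\<lambda>w. c * x w) = (\<lambda>w. c * proj k S x w)"
  using proj_sum[of k S "{()}" "\<lambda>_. c" "\<lambda>_. x"] by simp

lemma tens_assoc: "tens a u (tens b v x) = tens (a + b) (tens a u v) x"
proof
  fix w :: "bool list"
  have "take a (take (a + b) w) = take a w" "drop a (take (a + b) w) = take b (drop a w)"
    "drop b (drop a w) = drop (a + b) w"
    by (simp_all add: min_def drop_take add.commute)
  then show "tens a u (tens b v x) w = tens (a + b) (tens a u v) x w"
    by (simp add: tens_def mult.assoc)
qed

lemma tens_append: "length u = a \<Longrightarrow> tens a x y (u @ v) = x u * y v"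
  by (simp add: tens_def)

lemma tens_sum_right: "tens a \<xi> (\<lambda>w. \<Sum>i\<in>I. f i w) = (\<lambda>w. \<Sum>i\<in>I. tens a \<xi> (f i) w)"
  by (simp add: tens_def sum_distrib_left)

lemma tens_vecs:
  assumes "u \<in> vecs a" "v \<in> vecs b"
  shows "tens a u v \<in> vecs (a + b)"
  unfolding vecs_def
proof (intro CollectI allI impI)
  fix w :: "bool list"
  assume "length w \<noteq> a + b"
  then have "length (take a w) \<noteq> a \<or> length (drop a w) \<noteq> b" by auto
  then show "tens a u v w = 0" using assms unfolding vecs_def tens_def by auto
qed

lemma tenspE:
  assumes "g \<in> tensp a S T"
  obtains k :: nat and u v :: "nat \<Rightarrow> vec"
  where "\<forall>i<k. u i \<in> S \<and> v i \<in> T" "g = (\<lambda>w. \<Sum>i<k. tens a (u i) (v i) w)"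
  using assms unfolding tensp_def by blast

lemma tensp_vecs: "S \<subseteq> vecs a \<Longrightarrow> T \<subseteq> vecs b \<Longrightarrow> tensp a S T \<subseteq> vecs (a + b)"
proof
  fix x assume ST: "S \<subseteq> vecs a" "T \<subseteq> vecs b" and x: "x \<in> tensp a S T"
  obtain k :: nat and u v where uv: "\<forall>i<k. u i \<in> S \<and> v i \<in> T" "x = (\<lambda>w. \<Sum>i<k. tens a (u i) (v i) w)"
    using x by (rule tenspE)
  have "tens a (u i) (v i) \<in> vecs (a + b)" if "i < k" for i
    using tens_vecs uv(1) ST that by blast
  then show "x \<in> vecs (a + b)" unfolding uv(2) vecs_def by auto
qed

lemma tensp_zero: "(\<lambda>w. 0) \<in> tensp a S T"
  unfolding tensp_def by (intro CollectI exI[of _ 0]) simp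

lemma tensp_elem: "u \<in> S \<Longrightarrow> v \<in> T \<Longrightarrow> tens a u v \<in> tensp a S T"
  unfolding tensp_def by (intro CollectI exI[of _ 1] exI[of _ "\<lambda>i. u"] exI[of _ "\<lambda>i. v"]) simp

lemma sum_lessThan_add: "(\<Sum>i<k1 + k2. f i) = (\<Sum>i<k1. f i) + (\<Sum>i<k2. f (k1 + i))"
  for f :: "nat \<Rightarrow> 'a::comm_monoid_add"
  by (induction k2) (simp_all add: add.assoc)

lemma tensp_add:
  assumes "x \<in> tensp a S T" "y \<in> tensp a S T"
  shows "(\<lambda>w. x w + y w) \<in> tensp a S T"
proof -
  obtain k1 :: nat and u1 v1 where 1: "\<forall>i<k1. u1 i \<in> S \<and> v1 i \<in> T" "x = (\<lambda>w. \<Sum>i<k1. tens a (u1 i) (v1 i) w)"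
    using assms(1) by (rule tenspE)
  obtain k2 :: nat and u2 v2 where 2: "\<forall>i<k2. u2 i \<in> S \<and> v2 i \<in> T" "y = (\<lambda>w. \<Sum>i<k2. tens a (u2 i) (v2 i) w)"
    using assms(2) by (rule tenspE)
  define u where "u i = (if i < k1 then u1 i else u2 (i - k1))" for i
  define v where "v i = (if i < k1 then v1 i else v2 (i - k1))" for i
  have "\<forall>i<k1 + k2. u i \<in> S \<and> v i \<in> T" using 1 2 by (auto simp: u_def v_def)
  moreover have "(\<lambda>w. x w + y w) = (\<lambda>w. \<Sum>i<k1 + k2. tens a (u i) (v i) w)"
  proof
    fix w
    have "(\<Sum>i<k1 + k2. tens a (u i) (v i) w)
        = (\<Sum>i<k1. tens a (u i) (v i) w) + (\<Sum>i<k2. tens a (u (k1 + i)) (v (k1 + i)) w)"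
      by (rule sum_lessThan_add)
    also have "\<dots> = x w + y w"
      using 1 2 by (simp add: u_def v_def)
    finally show "x w + y w = (\<Sum>i<k1 + k2. tens a (u i) (v i) w)" ..
  qed
  ultimately show ?thesis
    unfolding tensp_def by (intro CollectI exI[of _ "k1 + k2"] exI[of _ u] exI[of _ v]) simp
qed

lemma tensp_scale:
  assumes S: "\<forall>c. \<forall>u\<in>S. (\<lambda>w. c * u w) \<in> S" and x: "x \<in> tensp a S T"
  shows "(\<lambda>w. c * x w) \<in> tensp a S T"
proof -
  obtain k :: nat and u v where 1: "\<forall>i<k. u i \<in> S \<and> v i \<in> T" "x = (\<lambda>w. \<Sum>i<k. tens a (u i) (v i) w)"
    using x by (rule tenspE)
  have "\<forall>i<k. (\<lambda>w. c * u i w) \<in> S \<and> v i \<in> T" using 1 S by auto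
  moreover have "(\<lambda>w. c * x w) = (\<lambda>w. \<Sum>i<k. tens a (\<lambda>w. c * u i w) (v i) w)"
    unfolding 1 by (simp add: tens_def sum_distrib_left mult.assoc)
  ultimately show ?thesis
    unfolding tensp_def by (intro CollectI exI[of _ k] exI[of _ "\<lambda>i w. c * u i w"] exI[of _ v]) simp
qed

lemma lin_subspace_tensp:
  assumes "lin_subspace a S" "lin_subspace b T"
  shows "lin_subspace (a + b) (tensp a S T)"
  unfolding lin_subspace_def
proof (intro conjI ballI allI)
  show "tensp a S T \<subseteq> vecs (a + b)"
    using tensp_vecs lin_subspaceD(1)[OF assms(1)] lin_subspaceD(1)[OF assms(2)] by blast
  show "(\<lambda>w. u w + v w) \<in> tensp a S T" if "u \<in> tensp a S T" "v \<in> tensp a S T" for u v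
    using tensp_add that by blast
  show "(\<lambda>w. c * u w) \<in> tensp a S T" if "u \<in> tensp a S T" for u c
    using tensp_scale lin_subspaceD(4)[OF assms(1)] that by blast
qed (rule tensp_zero)

lemma lin_subspace_scalars: "lin_subspace 0 scalars"
  unfolding lin_subspace_def
proof (intro conjI ballI allI subsetI)
  show "x \<in> vecs 0" if "x \<in> scalars" for x
    using that by (auto simp: scalars_def vecs_def)
  show "(\<lambda>w. 0) \<in> scalars"
    unfolding scalars_def by (intro CollectI exI[of _ 0]) auto
  fix u v assume "u \<in> scalars" "v \<in> scalars"
  then obtain a b where "u = (\<lambda>w. if w = [] then a else 0)" "v = (\<lambda>w. if w = [] then b else 0)"
    unfolding scalars_def by blast
  then show "(\<lambda>w. u w + v w) \<in> scalars"
    unfolding scalars_def by (intro CollectI exI[of _ "a + b"]) auto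
next
  fix c u assume "u \<in> scalars"
  then obtain a where "u = (\<lambda>w. if w = [] then a else 0)"
    unfolding scalars_def by blast
  then show "(\<lambda>w. c * u w) \<in> scalars"
    unfolding scalars_def by (intro CollectI exI[of _ "c * a"]) auto
qed

lemma lin_subspace_Lsym: "lin_subspace n (Lsym n)"
  unfolding lin_subspace_def Lsym_def vecs_def by auto

lemma lin_subspace_Lpow: "lin_subspace (n * m) (Lpow n m)"
  by (induction m) (simp_all add: lin_subspace_scalars lin_subspace_tensp lin_subspace_Lsym)

definition Dspan :: "nat \<Rightarrow> nat \<Rightarrow> vec set" where
  "Dspan n m = sumsp {1..m-1}
     (\<lambda>i. tensp (n*(i-1)) (Lpow n (i-1)) (tensp (2*n) (D2 n) (Lpow n (m-i-1))))"

lemma E_0: "E n 0 = scalars"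
  by (simp add: E_def)

lemma E_1: "E n (Suc 0) = Lsym n"
  by (simp add: E_def)

lemma E_ge_2: "2 \<le> m \<Longrightarrow> E n m = {v \<in> Lpow n m. \<forall>x \<in> Dspan n m. inp (n * m) v x = 0}"
  unfolding E_def Dspan_def by simp

lemma lin_subspace_E: "lin_subspace (n * m) (E n m)"
proof -
  consider "m = 0" | "m = 1" | "2 \<le> m" by linarith
  then show ?thesis
    by cases (simp_all add: E_0 E_1 E_ge_2 lin_subspace_scalars lin_subspace_Lsym
        lin_subspace_orth lin_subspace_Lpow)
qed

text \<open>\<open>contr a \<xi>\<close> is the adjoint of \<open>x \<mapsto> \<xi> \<otimes> x\<close>, for \<open>\<xi> \<in> (\<complex>\<^sup>2)\<^sup>\<otimes>\<^sup>a\<close>.\<close>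

definition contr :: "nat \<Rightarrow> vec \<Rightarrow> vec \<Rightarrow> vec" where
  "contr a \<xi> x = (\<lambda>w. \<Sum>u\<in>words a. cnj (\<xi> u) * x (u @ w))"

lemma sum_words_add: "(\<Sum>w\<in>words (a + b). f w) = (\<Sum>u\<in>words a. \<Sum>v\<in>words b. f (u @ v))"
proof -
  have "bij_betw (\<lambda>(u, v). u @ v) (words a \<times> words b) (words (a + b))"
  proof (rule bij_betwI')
    show "x \<in> words (a + b) \<Longrightarrow> \<exists>p\<in>words a \<times> words b. x = (case p of (u, v) \<Rightarrow> u @ v)" for x
      by (intro bexI[of _ "(take a x, drop a x)"]) auto
  qed auto
  then have "(\<Sum>w\<in>words (a + b). f w) = (\<Sum>(u, v)\<in>words a \<times> words b. f (u @ v))"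
    by (simp add: sum.reindex_bij_betw[symmetric] case_prod_beta)
  then show ?thesis by (simp add: sum.cartesian_product)
qed

lemma inp_tens_contr: "inp (a + b) g (tens a \<xi> x) = inp b (contr a \<xi> g) x"
proof -
  have "inp (a + b) g (tens a \<xi> x) = (\<Sum>u\<in>words a. \<Sum>v\<in>words b. g (u @ v) * cnj (\<xi> u * x v))"
    unfolding inp_def sum_words_add by (intro sum.cong refl) (simp add: tens_append)
  also have "\<dots> = (\<Sum>v\<in>words b. \<Sum>u\<in>words a. cnj (\<xi> u) * g (u @ v) * cnj (x v))"
    by (subst sum.swap) (simp add: algebra_simps)
  also have "\<dots> = inp b (contr a \<xi> g) x"
    unfolding inp_def contr_def by (simp add: sum_distrib_right)
  finally show ?thesis .
qed

lemma vnorm2_contr: "vnorm2 b (contr a \<xi> g) \<le> vnorm2 a \<xi> * vnorm2 (a + b) g"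
proof -
  have pointwise: "(cmod (contr a \<xi> g v))^2 \<le> vnorm2 a \<xi> * (\<Sum>u\<in>words a. (cmod (g (u @ v)))^2)" for v
  proof -
    have "cmod (contr a \<xi> g v) \<le> (\<Sum>u\<in>words a. cmod (\<xi> u) * cmod (g (u @ v)))"
      unfolding contr_def by (rule order_trans[OF norm_sum]) (simp add: norm_mult)
    then have "(cmod (contr a \<xi> g v))^2 \<le> (\<Sum>u\<in>words a. cmod (\<xi> u) * cmod (g (u @ v)))^2"
      by (simp add: power_mono)
    also have "\<dots> \<le> (\<Sum>u\<in>words a. (cmod (\<xi> u))^2) * (\<Sum>u\<in>words a. (cmod (g (u @ v)))^2)"
      by (rule Cauchy_Schwarz_ineq_sum)
    finally show ?thesis unfolding vnorm2_def .
  qed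
  have "vnorm2 b (contr a \<xi> g) \<le> (\<Sum>v\<in>words b. vnorm2 a \<xi> * (\<Sum>u\<in>words a. (cmod (g (u @ v)))^2))"
    unfolding vnorm2_def[of b] by (rule sum_mono) (rule pointwise)
  also have "\<dots> = vnorm2 a \<xi> * vnorm2 (a + b) g"
    unfolding vnorm2_def[of "a + b"] sum_words_add
    by (simp add: sum_distrib_left[symmetric] sum.swap[of _ "words b"])
  finally show ?thesis .
qed

lemma contr_tensp:
  assumes g: "g \<in> tensp n S T" and T: "lin_subspace b T"
  shows "contr n \<xi> g \<in> T"
proof -
  obtain k :: nat and u v where uv: "\<forall>i<k. u i \<in> S \<and> v i \<in> T"
    "g = (\<lambda>w. \<Sum>i<k. tens n (u i) (v i) w)"
    using g by (rule tenspE)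
  have "contr n \<xi> g = (\<lambda>w. \<Sum>i<k. (\<Sum>x\<in>words n. cnj (\<xi> x) * u i x) * v i w)"
  proof
    fix w
    have "contr n \<xi> g w = (\<Sum>x\<in>words n. \<Sum>i<k. cnj (\<xi> x) * u i x * v i w)"
      unfolding contr_def uv(2)
      by (intro sum.cong refl) (simp add: tens_append sum_distrib_left mult.assoc)
    also have "\<dots> = (\<Sum>i<k. (\<Sum>x\<in>words n. cnj (\<xi> x) * u i x) * v i w)"
      by (subst sum.swap) (simp add: sum_distrib_right)
    finally show "contr n \<xi> g w = (\<Sum>i<k. (\<Sum>x\<in>words n. cnj (\<xi> x) * u i x) * v i w)" .
  qed
  also have "\<dots> \<in> T" by (rule lin_subspace_sum[OF T]) (use uv(1) in auto)
  finally show ?thesis .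
qed

lemma Lpow_1_subset: "Lpow n (Suc 0) \<subseteq> Lsym n"
proof
  fix g assume "g \<in> Lpow n (Suc 0)"
  then obtain k :: nat and u v where uv: "\<forall>i<k. u i \<in> Lsym n \<and> v i \<in> scalars"
    "g = (\<lambda>w. \<Sum>i<k. tens n (u i) (v i) w)"
    by (auto elim: tenspE)
  have "\<forall>i<k. \<exists>c. v i = (\<lambda>w. if w = [] then c else 0)" using uv(1) by (auto simp: scalars_def)
  then obtain c where c: "\<forall>i<k. v i = (\<lambda>w. if w = [] then c i else 0)" by metis
  have "tens n (u i) (v i) = (\<lambda>w. c i * u i w)" if i: "i < k" for i
  proof
    fix w
    have "u i \<in> vecs n" using uv(1) i Lsym_def by auto
    then show "tens n (u i) (v i) w = c i * u i w"
      using c i by (cases "length w \<le> n") (auto simp: tens_def vecs_def)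
  qed
  then have "g = (\<lambda>w. \<Sum>i\<in>{..<k}. c i * u i w)" using uv(2) by simp
  also have "\<dots> \<in> Lsym n" by (rule lin_subspace_sum[OF lin_subspace_Lsym]) (use uv(1) in auto)
  finally show "g \<in> Lsym n" .
qed

lemma contr_Lsym: "g \<in> Lsym n \<Longrightarrow> contr n \<xi> g \<in> scalars"
  unfolding scalars_def Lsym_def vecs_def contr_def
  by (intro CollectI exI[of _ "contr n \<xi> g []"]) (auto simp: contr_def)

lemma tens_tensp_Lpow:
  assumes \<xi>: "\<xi> \<in> Lsym n" and y: "y \<in> tensp (n * p) (Lpow n p) T"
  shows "tens n \<xi> y \<in> tensp (n * Suc p) (Lpow n (Suc p)) T"
proof -
  obtain k :: nat and u v where uv: "\<forall>i<k. u i \<in> Lpow n p \<and> v i \<in> T"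
    "y = (\<lambda>w. \<Sum>i<k. tens (n * p) (u i) (v i) w)"
    using y by (rule tenspE)
  have "tens n \<xi> y = (\<lambda>w. \<Sum>i<k. tens (n * Suc p) (tens n \<xi> (u i)) (v i) w)"
    unfolding uv(2) tens_sum_right tens_assoc by simp
  moreover have "\<forall>i<k. tens n \<xi> (u i) \<in> Lpow n (Suc p) \<and> v i \<in> T"
    using uv(1) tensp_elem[OF \<xi>] by auto
  ultimately show ?thesis
    unfolding tensp_def by (intro CollectI exI[of _ k] exI[of _ "\<lambda>i. tens n \<xi> (u i)"] exI[of _ v]) simp
qed

lemma tens_Dspan:
  assumes \<xi>: "\<xi> \<in> Lsym n" and j: "1 \<le> j" and x: "x \<in> Dspan n j"
  shows "tens n \<xi> x \<in> Dspan n (Suc j)"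
proof -
  define V where "V m i = tensp (n*(i-1)) (Lpow n (i-1)) (tensp (2*n) (D2 n) (Lpow n (m-i-1)))"
    for m i
  have Dspan_V: "Dspan n m = sumsp {1..m-1} (V m)" for m
    unfolding Dspan_def V_def ..
  obtain y where y: "\<forall>i\<in>{1..j-1}. y i \<in> V j i" "x = (\<lambda>w. \<Sum>i\<in>{1..j-1}. y i w)"
    using x unfolding Dspan_V sumsp_def by blast
  define y' where "y' i = (if i = 1 then (\<lambda>w. 0) else tens n \<xi> (y (i-1)))" for i
  have "y' i \<in> V (Suc j) i" if i: "i \<in> {1..j}" for i
  proof (cases "i = 1")
    case False
    with i have i2: "2 \<le> i" "i \<le> j" by auto
    then have "i - 1 \<in> {1..j-1}" by auto
    then have "y (i-1) \<in> V j (i-1)" using y(1) by blast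
    then have "y (i-1) \<in> tensp (n * (i-2)) (Lpow n (i-2)) (tensp (2*n) (D2 n) (Lpow n (Suc j-i-1)))"
      using i2 by (simp add: V_def numeral_2_eq_2)
    from tens_tensp_Lpow[OF \<xi> this]
    have "tens n \<xi> (y (i-1))
      \<in> tensp (n * Suc (i-2)) (Lpow n (Suc (i-2))) (tensp (2*n) (D2 n) (Lpow n (Suc j-i-1)))" .
    moreover have "Suc (i-2) = i - 1" using i2 by simp
    ultimately show ?thesis using False by (simp add: y'_def V_def)
  qed (simp add: y'_def V_def tensp_zero)
  moreover have "(\<lambda>w. \<Sum>i\<in>{1..j}. y' i w) = tens n \<xi> x"
  proof
    fix w
    have "(\<Sum>i\<in>{1..j}. y' i w) = (\<Sum>i\<in>{Suc 1..Suc (j-1)}. y' i w)"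
      using j by (simp add: sum.atLeast_Suc_atMost y'_def)
    also have "\<dots> = (\<Sum>i\<in>{1..j-1}. tens n \<xi> (y i) w)"
      by (simp only: sum.shift_bounds_cl_Suc_ivl) (simp add: y'_def)
    finally show "(\<Sum>i\<in>{1..j}. y' i w) = tens n \<xi> x w"
      unfolding y(2) tens_sum_right by simp
  qed
  ultimately show ?thesis
    unfolding Dspan_V sumsp_def by (intro CollectI exI[of _ y'] conjI) auto
qed

text \<open>Since \<open>\<xi> \<otimes> Dspan n j \<subseteq> Dspan n (j + 1)\<close>, the adjoint of \<open>\<xi> \<otimes> -\<close> preserves the
  orthogonality conditions that define \<open>E\<close>.\<close>

lemma contr_E:
  assumes \<xi>: "\<xi> \<in> Lsym n" and g: "g \<in> E n (Suc j)"
  shows "contr n \<xi> g \<in> E n j"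
proof -
  consider "j = 0" | "j = 1" | "2 \<le> j" by linarith
  then show ?thesis
  proof cases
    case 1
    then show ?thesis using g contr_Lsym E_0 E_1 by simp
  next
    case 2
    then have "g \<in> tensp n (Lsym n) (Lpow n (Suc 0))" using g by (simp add: E_ge_2)
    then have "contr n \<xi> g \<in> Lpow n (Suc 0)" by (rule contr_tensp[OF _ lin_subspace_Lpow])
    then show ?thesis using 2 Lpow_1_subset E_1 by auto
  next
    case 3
    then have "g \<in> tensp n (Lsym n) (Lpow n j)" and g_orth: "\<forall>x\<in>Dspan n (Suc j). inp (n + n * j) g x = 0"
      using g by (simp_all add: E_ge_2)
    then have "contr n \<xi> g \<in> Lpow n j" using contr_tensp lin_subspace_Lpow by blast
    moreover have "inp (n * j) (contr n \<xi> g) x = 0" if "x \<in> Dspan n j" for x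
      using g_orth tens_Dspan[OF \<xi> _ that] 3 by (simp flip: inp_tens_contr)
    ultimately show ?thesis using 3 by (simp add: E_ge_2)
  qed
qed

section \<open>A resolution of the identity on \<open>E\<^sub>m\<close>, \<open>m \<ge> 1\<close>\<close>

definition delta :: "bool list \<Rightarrow> vec" where
  "delta u = (\<lambda>w. if w = u then 1 else 0)"

lemma vecs_delta_expansion:
  assumes "y \<in> vecs k"
  shows "y = (\<lambda>w. \<Sum>u\<in>words k. y u * delta u w)"
proof
  fix w
  have "(\<Sum>u\<in>words k. y u * delta u w) = (\<Sum>u\<in>words k. if w = u then y w else 0)"
    by (intro sum.cong) (auto simp: delta_def)
  then show "y w = (\<Sum>u\<in>words k. y u * delta u w)"
    using assms by (auto simp: vecs_def)
qed

lemma inp_delta_left: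
  assumes "length u = k"
  shows "inp k (delta u) y = cnj (y u)"
proof -
  have "inp k (delta u) y = (\<Sum>w\<in>words k. if u = w then cnj (y u) else 0)"
    unfolding inp_def by (intro sum.cong) (auto simp: delta_def)
  then show ?thesis using assms by simp
qed

context
  fixes k :: nat and S :: "vec set"
  assumes S: "lin_subspace k S"
begin

lemma proj_delta_expansion:
  "y \<in> vecs k \<Longrightarrow> proj k S y = (\<lambda>w. \<Sum>u\<in>words k. y u * proj k S (delta u) w)"
  by (subst vecs_delta_expansion) (simp_all add: proj_sum[OF S])

lemma proj_delta_cnj:
  assumes "length u = k" "length v = k"
  shows "proj k S (delta u) v = cnj (proj k S (delta v) u)"
proof -
  have "inp k (proj k S (delta u)) (proj k S (delta v)) = cnj (proj k S (delta v) u)"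
    "inp k (proj k S (delta v)) (proj k S (delta u)) = cnj (proj k S (delta u) v)"
    using assms by (simp_all add: proj_inp[OF S proj_in[OF S]] inp_delta_left)
  then show ?thesis
    using inp_cnj[of k "proj k S (delta u)" "proj k S (delta v)"] by simp
qed

text \<open>The vectors \<open>\<xi>\<^sub>u = P\<^sub>S \<delta>\<^sub>u\<close> form a Parseval frame of \<open>S\<close>: their kernel
  \<open>\<Sum>\<^sub>u \<xi>\<^sub>u(a) \<xi>\<^sub>u(b)\<^sup>*\<close> is the reproducing kernel \<open>(P\<^sub>S \<delta>\<^sub>b)(a)\<close> of \<open>S\<close>.\<close>

lemma proj_delta_frame:
  assumes a: "length a = k" and G: "G \<in> S"
  shows "(\<Sum>u\<in>words k. proj k S (delta u) a * (\<Sum>b\<in>words k. cnj (proj k S (delta u) b) * G b)) = G a"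
proof -
  let ?\<xi> = "\<lambda>u. proj k S (delta u)"
  have kernel: "(\<Sum>u\<in>words k. ?\<xi> u a * cnj (?\<xi> u b)) = ?\<xi> b a" if b: "length b = k" for b
  proof -
    have "(\<Sum>u\<in>words k. ?\<xi> u a * cnj (?\<xi> u b)) = (\<Sum>u\<in>words k. ?\<xi> b u * ?\<xi> u a)"
      by (intro sum.cong refl) (simp add: proj_delta_cnj[OF _ b] mult.commute)
    also have "\<dots> = proj k S (?\<xi> b) a"
      using proj_delta_expansion[OF lin_subspaceD(1)[OF S, THEN subsetD, OF proj_in[OF S]]] by simp
    also have "\<dots> = ?\<xi> b a" by (simp add: proj_id[OF S proj_in[OF S]])
    finally show ?thesis .
  qed
  have "(\<Sum>u\<in>words k. ?\<xi> u a * (\<Sum>b\<in>words k. cnj (?\<xi> u b) * G b))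
      = (\<Sum>b\<in>words k. (\<Sum>u\<in>words k. ?\<xi> u a * cnj (?\<xi> u b)) * G b)"
    unfolding sum_distrib_left sum_distrib_right mult.assoc by (rule sum.swap)
  also have "\<dots> = (\<Sum>b\<in>words k. G b * ?\<xi> b a)"
    by (intro sum.cong refl) (simp add: kernel mult.commute)
  also have "\<dots> = proj k S G a"
    using proj_delta_expansion[OF lin_subspaceD(1)[OF S, THEN subsetD, OF G]] by simp
  also have "\<dots> = G a" by (simp add: proj_id[OF S G])
  finally show ?thesis .
qed

end

lemma E_slice_Lsym:
  assumes g: "g \<in> E n m" and m: "1 \<le> m"
  shows "(\<lambda>a. if length a = n then g (a @ v) else 0) \<in> Lsym n"
proof (cases "m = 1")
  case True
  then have g: "g \<in> Lsym n" using g E_1 by simp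
  then have "(\<lambda>a. if length a = n then g (a @ v) else 0) = (if v = [] then g else (\<lambda>w. 0))"
    by (auto simp: Lsym_def vecs_def)
  then show ?thesis using g lin_subspaceD(2)[OF lin_subspace_Lsym] by simp
next
  case False
  with m have m2: "2 \<le> m" by simp
  have "Lpow n m = tensp n (Lsym n) (Lpow n (m - 1))" using m2 by (cases m) simp_all
  with g m2 have "g \<in> tensp n (Lsym n) (Lpow n (m - 1))" by (simp add: E_ge_2)
  then obtain k :: nat and u w where uw: "\<forall>i<k. u i \<in> Lsym n \<and> w i \<in> Lpow n (m - 1)"
    "g = (\<lambda>x. \<Sum>i<k. tens n (u i) (w i) x)"
    by (rule tenspE)
  have "(\<lambda>a. if length a = n then g (a @ v) else 0) = (\<lambda>a. \<Sum>i\<in>{..<k}. w i v * u i a)"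
  proof
    fix a :: "bool list"
    show "(if length a = n then g (a @ v) else 0) = (\<Sum>i\<in>{..<k}. w i v * u i a)"
      using uw by (cases "length a = n") (simp_all add: tens_append mult.commute Lsym_def vecs_def)
  qed
  also have "\<dots> \<in> Lsym n"
    by (rule lin_subspace_sum[OF lin_subspace_Lsym]) (use uw(1) in auto)
  finally show ?thesis .
qed

definition sym_delta :: "nat \<Rightarrow> bool list \<Rightarrow> vec" where
  "sym_delta n u = proj n (Lsym n) (delta u)"

lemma sym_delta_Lsym: "sym_delta n u \<in> Lsym n"
  unfolding sym_delta_def by (rule proj_in[OF lin_subspace_Lsym])

text \<open>In operator terms: \<open>\<Sum>\<^sub>u T\<^sub>\<xi>\<^sub>u T\<^sub>\<xi>\<^sub>u\<^sup>* = 1\<close> on \<open>E\<^sub>m\<close> for \<open>m \<ge> 1\<close>, where \<open>\<xi>\<^sub>u = sym_delta n u\<close>.\<close>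

lemma sum_tens_contr_sym_delta:
  assumes g: "g \<in> E n m" and m: "1 \<le> m"
  shows "(\<lambda>z. \<Sum>u\<in>words n. tens n (sym_delta n u) (contr n (sym_delta n u) g) z) = g"
proof
  fix z :: "bool list"
  show "(\<Sum>u\<in>words n. tens n (sym_delta n u) (contr n (sym_delta n u) g) z) = g z"
  proof (cases "length z < n")
    case True
    then have "sym_delta n u (take n z) = 0" for u
      using sym_delta_Lsym[of n u] by (auto simp: Lsym_def vecs_def)
    moreover have "g z = 0"
    proof -
      have "n \<le> n * m" using m by (metis mult_1_right mult_le_mono2)
      then have "length z \<noteq> n * m" using True by linarith
      then show ?thesis
        using lin_subspaceD(1)[OF lin_subspace_E, of n m] g by (auto simp: vecs_def)
    qed
    ultimately show ?thesis by (simp add: tens_def)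
  next
    case False
    define a where "a = take n z"
    define v where "v = drop n z"
    define G where "G = (\<lambda>a. if length a = n then g (a @ v) else 0)"
    have a: "length a = n" and z: "z = a @ v" using False by (simp_all add: a_def v_def)
    have "(\<Sum>u\<in>words n. tens n (sym_delta n u) (contr n (sym_delta n u) g) z)
        = (\<Sum>u\<in>words n. sym_delta n u a * (\<Sum>b\<in>words n. cnj (sym_delta n u b) * G b))"
      unfolding z by (intro sum.cong refl) (simp add: tens_append[OF a] contr_def G_def)
    also have "\<dots> = G a"
      unfolding sym_delta_def
      by (rule proj_delta_frame[OF lin_subspace_Lsym a]) (simp add: G_def E_slice_Lsym[OF g m])
    also have "\<dots> = g z" by (simp add: G_def a z)
    finally show ?thesis .
  qed
qed

section \<open>Membership in the Toeplitz algebra\<close>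

text \<open>Elements of \<open>Toep n\<close> are functions on all of \<open>fvec\<close>; only their restriction to the
  Fock space \<open>F\<close> is meaningful.\<close>

definition in_Toep :: "nat \<Rightarrow> (fvec \<Rightarrow> fvec) \<Rightarrow> bool" where
  "in_Toep n F \<longleftrightarrow> (\<exists>A\<in>Toep n. \<forall>f\<in>Fock n. A f = F f)"

lemma in_Toep_cong: "in_Toep n F \<Longrightarrow> (\<And>f. f \<in> Fock n \<Longrightarrow> F f = G f) \<Longrightarrow> in_Toep n G"
  unfolding in_Toep_def by simp

lemma in_Toep_unit: "in_Toep n (\<lambda>f. f)"
  unfolding in_Toep_def by (rule bexI[OF _ Toep.unit]) simp

lemma in_Toep_Tx: "\<xi> \<in> E n k \<Longrightarrow> in_Toep n (Tx n k \<xi>)"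
  unfolding in_Toep_def by (rule bexI[OF _ Toep.gen]) simp_all

lemma in_Toep_add:
  assumes "in_Toep n F" "in_Toep n G"
  shows "in_Toep n (\<lambda>f m w. F f m w + G f m w)"
proof -
  obtain A B where "A \<in> Toep n" "B \<in> Toep n" "\<forall>f\<in>Fock n. A f = F f" "\<forall>f\<in>Fock n. B f = G f"
    using assms unfolding in_Toep_def by blast
  then show ?thesis
    unfolding in_Toep_def by (auto intro!: bexI[OF _ Toep.add[of A n B]])
qed

lemma in_Toep_smult:
  assumes "in_Toep n F"
  shows "in_Toep n (\<lambda>f m w. c * F f m w)"
proof -
  obtain A where "A \<in> Toep n" "\<forall>f\<in>Fock n. A f = F f"
    using assms unfolding in_Toep_def by blast
  then show ?thesis
    unfolding in_Toep_def by (auto intro!: bexI[OF _ Toep.smult[of A n c]])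
qed

lemma in_Toep_comp:
  assumes "in_Toep n F" "in_Toep n G" "\<And>f. f \<in> Fock n \<Longrightarrow> G f \<in> Fock n"
  shows "in_Toep n (\<lambda>f. F (G f))"
proof -
  obtain A B where "A \<in> Toep n" "B \<in> Toep n" "\<forall>f\<in>Fock n. A f = F f" "\<forall>f\<in>Fock n. B f = G f"
    using assms(1,2) unfolding in_Toep_def by blast
  then show ?thesis
    unfolding in_Toep_def using assms(3) by (auto intro!: bexI[OF _ Toep.comp[of A n B]])
qed

text \<open>Unlike \<open>in_Toep_comp\<close>, this needs no invariance of the Fock space, since \<open>A\<close> is an element
  of \<open>Toep n\<close> itself rather than a representative up to restriction.\<close>

lemma in_Toep_comp_Toep:
  assumes "A \<in> Toep n" "in_Toep n G"
  shows "in_Toep n (\<lambda>f. A (G f))"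
proof -
  obtain B where "B \<in> Toep n" "\<forall>f\<in>Fock n. B f = G f"
    using assms(2) unfolding in_Toep_def by blast
  then show ?thesis
    unfolding in_Toep_def by (auto intro!: bexI[OF _ Toep.comp[OF assms(1), of B]])
qed

lemma in_Toep_sum:
  "finite U \<Longrightarrow> (\<And>u. u \<in> U \<Longrightarrow> in_Toep n (F u)) \<Longrightarrow> in_Toep n (\<lambda>f m w. \<Sum>u\<in>U. F u f m w)"
proof (induction U rule: finite_induct)
  case empty
  have "in_Toep n (\<lambda>f m w. 0 * f m w)" by (rule in_Toep_smult[OF in_Toep_unit])
  then show ?case by simp
next
  case (insert a U)
  then have "in_Toep n (\<lambda>f m w. F a f m w + (\<Sum>u\<in>U. F u f m w))"
    by (intro in_Toep_add) simp_all
  then show ?case using insert by simp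
qed

lemma in_Toep_adjoint:
  assumes "in_Toep n F" "\<And>f. f \<in> Fock n \<Longrightarrow> B f \<in> Fock n"
    "\<And>f g. f \<in> Fock n \<Longrightarrow> g \<in> Fock n \<Longrightarrow> Finp n (F f) g = Finp n f (B g)"
  shows "in_Toep n B"
proof -
  obtain A where "A \<in> Toep n" "\<forall>f\<in>Fock n. A f = F f"
    using assms(1) unfolding in_Toep_def by blast
  then have "B \<in> Toep n" using assms(2,3) by (auto intro!: Toep.adj[of A n B])
  then show ?thesis unfolding in_Toep_def by blast
qed

lemma opnorm_cong:
  assumes "\<And>f. f \<in> Fock n \<Longrightarrow> A f = B f"
  shows "opnorm n A = opnorm n B"
proof -
  have "{Fnorm n (C f) |f. f \<in> Fock n \<and> Fnorm n f \<le> 1}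
      = (\<lambda>f. Fnorm n (C f)) ` {f \<in> Fock n. Fnorm n f \<le> 1}" for C
    by blast
  moreover have "(\<lambda>f. Fnorm n (A f)) ` {f \<in> Fock n. Fnorm n f \<le> 1}
      = (\<lambda>f. Fnorm n (B f)) ` {f \<in> Fock n. Fnorm n f \<le> 1}"
    using assms by (intro image_cong) auto
  ultimately show ?thesis unfolding opnorm_def by simp
qed

lemma in_Toep_limit:
  assumes F: "\<And>j. in_Toep n (F j)" and B: "bounded_op n B"
    and lim: "(\<lambda>j. opnorm n (\<lambda>f m w. F j f m w - B f m w)) \<longlonglongrightarrow> 0"
  shows "in_Toep n B"
proof -
  have "\<forall>j. \<exists>A. A \<in> Toep n \<and> (\<forall>f\<in>Fock n. A f = F j f)"
    using F unfolding in_Toep_def by blast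
  then obtain A where A: "\<And>j. A j \<in> Toep n" "\<And>j f. f \<in> Fock n \<Longrightarrow> A j f = F j f"
    by metis
  have "opnorm n (\<lambda>f m w. A j f m w - B f m w) = opnorm n (\<lambda>f m w. F j f m w - B f m w)" for j
    by (rule opnorm_cong) (simp add: A(2))
  then have "(\<lambda>j. opnorm n (\<lambda>f m w. A j f m w - B f m w)) \<longlonglongrightarrow> 0"
    using lim by simp
  then have "B \<in> Toep n" by (rule Toep.lim[OF allI[OF A(1)] B])
  then show ?thesis unfolding in_Toep_def by blast
qed

section \<open>Diagonal operators\<close>

definition diag_op :: "(nat \<Rightarrow> complex) \<Rightarrow> fvec \<Rightarrow> fvec" where
  "diag_op e f = (\<lambda>m w. e m * f m w)"

lemma vnorm2_scale_le:
  assumes "cmod c \<le> \<delta>"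
  shows "vnorm2 k (\<lambda>w. c * v w) \<le> \<delta>\<^sup>2 * vnorm2 k v"
proof -
  have "vnorm2 k (\<lambda>w. c * v w) = (cmod c)\<^sup>2 * vnorm2 k v"
    by (simp add: vnorm2_def norm_mult power_mult_distrib sum_distrib_left)
  also have "\<dots> \<le> \<delta>\<^sup>2 * vnorm2 k v"
    using assms by (intro mult_right_mono[OF _ vnorm2_nonneg] power_mono) simp_all
  finally show ?thesis .
qed

lemma Fock_diag_op:
  assumes f: "f \<in> Fock n" and e: "\<And>m. cmod (e m) \<le> \<delta>"
  shows "diag_op e f \<in> Fock n"
proof -
  have "summable (\<lambda>m. vnorm2 (n * m) (f m))" using f by (simp add: Fock_def)
  then have "summable (\<lambda>m. vnorm2 (n * m) (\<lambda>w. e m * f m w))"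
    by (rule summable_comparison_test'[OF summable_mult[of _ "\<delta>\<^sup>2"]])
      (simp add: vnorm2_nonneg vnorm2_scale_le[OF e])
  moreover have "(\<lambda>w. e m * f m w) \<in> E n m" for m
    using f lin_subspaceD(4)[OF lin_subspace_E] by (simp add: Fock_def)
  ultimately show ?thesis by (simp add: Fock_def diag_op_def)
qed

lemma Fnorm_diag_op_le:
  assumes f: "f \<in> Fock n" and e: "\<And>m. cmod (e m) \<le> \<delta>"
  shows "Fnorm n (diag_op e f) \<le> \<delta> * Fnorm n f"
proof -
  have "0 \<le> \<delta>" using e[of 0] norm_ge_zero[of "e 0"] by linarith
  have fs: "summable (\<lambda>m. vnorm2 (n * m) (f m))" using f by (simp add: Fock_def)
  have gs: "summable (\<lambda>m. vnorm2 (n * m) (\<lambda>w. e m * f m w))"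
    using Fock_diag_op[OF f e] by (simp add: Fock_def diag_op_def)
  have "(\<Sum>m. vnorm2 (n * m) (\<lambda>w. e m * f m w)) \<le> (\<Sum>m. \<delta>\<^sup>2 * vnorm2 (n * m) (f m))"
    by (rule suminf_le[OF vnorm2_scale_le[OF e] gs summable_mult[OF fs]])
  also have "\<dots> = \<delta>\<^sup>2 * (\<Sum>m. vnorm2 (n * m) (f m))" by (rule suminf_mult[OF fs])
  finally have "sqrt (\<Sum>m. vnorm2 (n * m) (\<lambda>w. e m * f m w)) \<le> sqrt (\<delta>\<^sup>2 * (\<Sum>m. vnorm2 (n * m) (f m)))"
    by (rule real_sqrt_le_mono)
  also have "\<dots> = \<delta> * sqrt (\<Sum>m. vnorm2 (n * m) (f m))"
    using \<open>0 \<le> \<delta>\<close> by (simp add: real_sqrt_mult)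
  finally show ?thesis unfolding Fnorm_def diag_op_def .
qed

lemma Fock_zero: "(\<lambda>m w. 0) \<in> Fock n"
proof -
  have "vnorm2 k (\<lambda>w. 0) = 0" for k by (simp add: vnorm2_def)
  moreover have "(\<lambda>w. 0) \<in> E n m" for m by (rule lin_subspaceD(2)[OF lin_subspace_E])
  ultimately show ?thesis by (simp add: Fock_def)
qed

lemma Fnorm_zero: "Fnorm n (\<lambda>m w. 0) = 0"
  by (simp add: Fnorm_def vnorm2_def)

lemma Fnorm_diag_op_unit_ball:
  assumes e: "\<And>m. cmod (e m) \<le> \<delta>" and f: "f \<in> Fock n" "Fnorm n f \<le> 1"
  shows "Fnorm n (diag_op e f) \<le> \<delta>"
proof -
  have "0 \<le> \<delta>" using e[of 0] norm_ge_zero[of "e 0"] by linarith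
  have "Fnorm n (diag_op e f) \<le> \<delta> * Fnorm n f" by (rule Fnorm_diag_op_le[OF f(1) e])
  also have "\<dots> \<le> \<delta>" using mult_left_mono[OF f(2) \<open>0 \<le> \<delta>\<close>] by simp
  finally show ?thesis .
qed

lemma bounded_op_diag_op:
  assumes e: "\<And>m. cmod (e m) \<le> \<delta>"
  shows "bounded_op n (diag_op e)"
  unfolding bounded_op_def
proof (intro conjI ballI bdd_aboveI)
  show "x \<le> \<delta>" if "x \<in> {Fnorm n (diag_op e f) |f. f \<in> Fock n \<and> Fnorm n f \<le> 1}" for x
    using that Fnorm_diag_op_unit_ball[of e \<delta>, OF e] by blast
qed (rule Fock_diag_op[OF _ e])

lemma opnorm_diag_op:
  assumes e: "\<And>m. cmod (e m) \<le> \<delta>"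
  shows "0 \<le> opnorm n (diag_op e)" "opnorm n (diag_op e) \<le> \<delta>"
proof -
  let ?S = "{Fnorm n (diag_op e f) |f. f \<in> Fock n \<and> Fnorm n f \<le> 1}"
  have le: "\<And>x. x \<in> ?S \<Longrightarrow> x \<le> \<delta>"
    using Fnorm_diag_op_unit_ball[of e \<delta>, OF e] by blast
  have "diag_op e (\<lambda>m w. 0) = (\<lambda>m w. 0)" by (simp add: diag_op_def)
  then have zero: "0 \<in> ?S"
    using Fock_zero Fnorm_zero by (metis (mono_tags, lifting) mem_Collect_eq zero_less_one less_imp_le)
  show "0 \<le> opnorm n (diag_op e)"
    unfolding opnorm_def by (rule cSup_upper2[OF zero order_refl bdd_aboveI[OF le]])
  show "opnorm n (diag_op e) \<le> \<delta>"
    unfolding opnorm_def using zero le by (intro cSup_least) auto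
qed

definition contr_shift :: "nat \<Rightarrow> vec \<Rightarrow> fvec \<Rightarrow> fvec" where
  "contr_shift n \<xi> f = (\<lambda>j. contr n \<xi> (f (Suc j)))"

lemma Fock_contr_shift:
  assumes \<xi>: "\<xi> \<in> Lsym n" and f: "f \<in> Fock n"
  shows "contr_shift n \<xi> f \<in> Fock n"
proof -
  have fs: "summable (\<lambda>j. vnorm2 (n * Suc j) (f (Suc j)))"
    using f summable_Suc_iff[of "\<lambda>m. vnorm2 (n * m) (f m)"] by (simp add: Fock_def)
  have "summable (\<lambda>j. vnorm2 (n * j) (contr n \<xi> (f (Suc j))))"
    using vnorm2_contr[of "n * _" n \<xi>]
    by (intro summable_comparison_test'[OF summable_mult[OF fs, of "vnorm2 n \<xi>"]])
      (simp add: vnorm2_nonneg)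
  moreover have "contr n \<xi> (f (Suc j)) \<in> E n j" for j
    using f contr_E[OF \<xi>] by (simp add: Fock_def)
  ultimately show ?thesis by (simp add: Fock_def contr_shift_def)
qed

lemma suminf_Suc_eq: "f 0 = 0 \<Longrightarrow> (\<Sum>j. f (Suc j)) = suminf f"
  for f :: "nat \<Rightarrow> 'a::real_normed_vector"
proof -
  assume "f 0 = 0"
  then have "(\<lambda>j. f (Suc j)) sums s \<longleftrightarrow> f sums s" for s
    using sums_Suc_iff[of f s] by simp
  then have "(sums) (\<lambda>j. f (Suc j)) = (sums) f" by (intro ext)
  then show ?thesis unfolding suminf_def by simp
qed

lemma Finp_Tx_contr_shift:
  assumes g: "g \<in> Fock n"
  shows "Finp n (Tx n 1 \<xi> f) g = Finp n f (contr_shift n \<xi> g)"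
proof -
  have "inp (n * Suc j) (Tx n 1 \<xi> f (Suc j)) (g (Suc j)) = inp (n * j) (f j) (contr_shift n \<xi> g j)" for j
  proof -
    have "inp (n * Suc j) (Tx n 1 \<xi> f (Suc j)) (g (Suc j))
        = inp (n * Suc j) (proj (n * Suc j) (E n (Suc j)) (tens n \<xi> (f j))) (g (Suc j))"
      by (simp add: Tx_def)
    also have "\<dots> = inp (n * Suc j) (tens n \<xi> (f j)) (g (Suc j))"
      by (rule proj_inp[OF lin_subspace_E]) (use g in \<open>simp add: Fock_def\<close>)
    also have "\<dots> = cnj (inp (n + n * j) (g (Suc j)) (tens n \<xi> (f j)))"
      by (simp only: mult_Suc_right) (rule inp_cnj)
    also have "\<dots> = inp (n * j) (f j) (contr_shift n \<xi> g j)"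
      by (simp add: contr_shift_def inp_tens_contr inp_cnj[of "n * j" "f j"])
    finally show ?thesis .
  qed
  moreover have "inp 0 (Tx n 1 \<xi> f 0) (g 0) = 0" by (simp add: Tx_def)
  ultimately show ?thesis
    unfolding Finp_def by (subst suminf_Suc_eq[symmetric]) simp_all
qed

lemma in_Toep_contr_shift:
  assumes "\<xi> \<in> Lsym n"
  shows "in_Toep n (contr_shift n \<xi>)"
proof (rule in_Toep_adjoint[OF in_Toep_Tx[of \<xi> n 1]])
  show "\<xi> \<in> E n 1" using assms by (simp add: E_1)
  show "contr_shift n \<xi> f \<in> Fock n" if "f \<in> Fock n" for f
    by (rule Fock_contr_shift[OF assms that])
  show "Finp n (Tx n 1 \<xi> f) g = Finp n f (contr_shift n \<xi> g)" if "g \<in> Fock n" for f g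
    by (rule Finp_Tx_contr_shift[OF that])
qed

text \<open>Conjugating a diagonal operator with the Parseval frame \<open>T\<^sub>\<xi>\<^sub>u\<close> shifts its diagonal.\<close>

lemma sum_Tx_diag_op_contr_shift:
  assumes f: "f \<in> Fock n"
  shows "(\<lambda>m w. \<Sum>u\<in>words n. Tx n 1 (sym_delta n u) (diag_op e (contr_shift n (sym_delta n u) f)) m w)
    = diag_op (\<lambda>m. case m of 0 \<Rightarrow> 0 | Suc j \<Rightarrow> e j) f"
proof (intro ext)
  fix m w
  show "(\<Sum>u\<in>words n. Tx n 1 (sym_delta n u) (diag_op e (contr_shift n (sym_delta n u) f)) m w)
    = diag_op (\<lambda>m. case m of 0 \<Rightarrow> 0 | Suc j \<Rightarrow> e j) f m w"
  proof (cases m)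
    case 0
    then show ?thesis by (simp add: Tx_def diag_op_def)
  next
    case (Suc j)
    let ?P = "proj (n * Suc j) (E n (Suc j))"
    let ?x = "\<lambda>u. tens n (sym_delta n u) (contr n (sym_delta n u) (f (Suc j)))"
    have fj: "f (Suc j) \<in> E n (Suc j)" using f by (simp add: Fock_def)
    have "Tx n 1 (sym_delta n u) (diag_op e (contr_shift n (sym_delta n u) f)) m
        = ?P (\<lambda>w. e j * ?x u w)" for u
      using Suc by (simp add: Tx_def diag_op_def contr_shift_def tens_def mult.left_commute)
    then have "(\<Sum>u\<in>words n. Tx n 1 (sym_delta n u) (diag_op e (contr_shift n (sym_delta n u) f)) m w)
      = (\<Sum>u\<in>words n. e j * ?P (?x u) w)"
      by (simp only: proj_scale[OF lin_subspace_E])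
    also have "\<dots> = e j * ?P (\<lambda>z. \<Sum>u\<in>words n. 1 * ?x u z) w"
    proof -
      have "?P (\<lambda>z. \<Sum>u\<in>words n. 1 * ?x u z) = (\<lambda>z. \<Sum>u\<in>words n. 1 * ?P (?x u) z)"
        by (rule proj_sum[OF lin_subspace_E finite_words])
      then show ?thesis by (simp add: sum_distrib_left)
    qed
    also have "\<dots> = e j * f (Suc j) w"
      using sum_tens_contr_sym_delta[OF fj] proj_id[OF lin_subspace_E fj] by simp
    finally show ?thesis using Suc by (simp add: diag_op_def)
  qed
qed

lemma in_Toep_diag_op_shift:
  assumes "in_Toep n (diag_op e)"
  shows "in_Toep n (diag_op (\<lambda>m. case m of 0 \<Rightarrow> 0 | Suc j \<Rightarrow> e j))"
proof -
  have "in_Toep n (\<lambda>f m w. \<Sum>u\<in>words n. Tx n 1 (sym_delta n u) (diag_op e (contr_shift n (sym_delta n u) f)) m w)"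
  proof (rule in_Toep_sum[OF finite_words])
    fix u
    have "in_Toep n (\<lambda>f. diag_op e (contr_shift n (sym_delta n u) f))"
      by (rule in_Toep_comp[OF assms in_Toep_contr_shift[OF sym_delta_Lsym]
            Fock_contr_shift[OF sym_delta_Lsym]])
    moreover have "Tx n 1 (sym_delta n u) \<in> Toep n"
      by (rule Toep.gen) (simp add: E_1 sym_delta_Lsym)
    ultimately show "in_Toep n (\<lambda>f. Tx n 1 (sym_delta n u) (diag_op e (contr_shift n (sym_delta n u) f)))"
      by (rule in_Toep_comp_Toep[rotated])
  qed
  then show ?thesis by (rule in_Toep_cong) (rule sum_Tx_diag_op_contr_shift)
qed

lemma in_Toep_diag_op_eventually_const:
  "in_Toep n (diag_op (\<lambda>m. if m < M then c m else L))"
proof (induction M arbitrary: c)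
  case 0
  have "in_Toep n (\<lambda>f m w. L * f m w)" by (rule in_Toep_smult[OF in_Toep_unit])
  then show ?case by (simp add: diag_op_def)
next
  case (Suc M)
  \<comment> \<open>\<open>(c\<^sub>0, c\<^sub>1, c\<^sub>2, \<dots>) = c\<^sub>0 ((1, 1, 1, \<dots>) - (0, 1, 1, \<dots>)) + (0, c\<^sub>1, c\<^sub>2, \<dots>)\<close>\<close>
  let ?shift = "\<lambda>e m. case m of 0 \<Rightarrow> 0 | Suc j \<Rightarrow> e j"
  have "in_Toep n (diag_op (\<lambda>m. 1 :: complex))"
    using in_Toep_unit by (rule in_Toep_cong) (simp add: diag_op_def)
  then have "in_Toep n (\<lambda>f m w. c 0 * (f m w + (-1) * diag_op (?shift (\<lambda>m. 1)) f m w)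
      + diag_op (?shift (\<lambda>j. if j < M then c (Suc j) else L)) f m w)"
    using Suc.IH[of "\<lambda>j. c (Suc j)"]
    by (intro in_Toep_add in_Toep_smult in_Toep_unit in_Toep_diag_op_shift)
  then show ?case
    by (rule in_Toep_cong) (auto simp: diag_op_def fun_eq_iff split: nat.split)
qed

lemma in_Toep_diag_op_convergent:
  assumes c: "c \<longlonglongrightarrow> L"
  shows "in_Toep n (diag_op c)"
proof (rule in_Toep_limit)
  show "in_Toep n (diag_op (\<lambda>m. if m < j then c m else L))" for j
    by (rule in_Toep_diag_op_eventually_const)
  obtain K where "\<And>m. cmod (c m) \<le> K"
    using convergent_imp_Bseq[OF convergentI[OF c]] by (auto simp: Bseq_def)
  then show "bounded_op n (diag_op c)" by (rule bounded_op_diag_op)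
  show "(\<lambda>j. opnorm n (\<lambda>f m w. diag_op (\<lambda>m. if m < j then c m else L) f m w - diag_op c f m w))
    \<longlonglongrightarrow> 0"
  proof (rule LIMSEQ_I)
    fix r :: real
    assume "0 < r"
    then obtain N where N: "\<And>m. N \<le> m \<Longrightarrow> cmod (c m - L) < r / 2"
      using LIMSEQ_D[OF c, of "r / 2"] by auto
    have "norm (opnorm n (\<lambda>f m w. diag_op (\<lambda>m. if m < j then c m else L) f m w - diag_op c f m w) - 0) < r"
      if "N \<le> j" for j
    proof -
      have "cmod ((if m < j then c m else L) - c m) \<le> r / 2" for m
        using N[of m] that \<open>0 < r\<close> by (auto simp: norm_minus_commute)
      then have "0 \<le> opnorm n (diag_op (\<lambda>m. (if m < j then c m else L) - c m))"
        "opnorm n (diag_op (\<lambda>m. (if m < j then c m else L) - c m)) \<le> r / 2"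
        by (rule opnorm_diag_op)+
      moreover have "(\<lambda>f m w. diag_op (\<lambda>m. if m < j then c m else L) f m w - diag_op c f m w)
          = diag_op (\<lambda>m. (if m < j then c m else L) - c m)"
        by (simp add: diag_op_def fun_eq_iff left_diff_distrib)
      ultimately show ?thesis using \<open>0 < r\<close> by simp
    qed
    then show "\<exists>N. \<forall>j\<ge>N. norm (opnorm n (\<lambda>f m w. diag_op (\<lambda>m. if m < j then c m else L) f m w
        - diag_op c f m w) - 0) < r"
      by blast
  qed
qed

section \<open>The ratios \<open>d\<^sub>m / d\<^sub>m\<^sub>+\<^sub>1\<close>\<close>

lemma d_ge_1_less_Suc: "1 \<le> n \<Longrightarrow> 1 \<le> d n m \<and> d n m < d n (Suc m)"
proof (induction m)
  case (Suc m)
  then have "2 * d n (Suc m) \<le> (int n + 1) * d n (Suc m)"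
    by (intro mult_right_mono) auto
  moreover have "d n (Suc (Suc m)) = (int n + 1) * d n (Suc m) - d n m" by simp
  ultimately show ?case using Suc by linarith
qed simp

lemma d_cassini: "(d n (Suc m))\<^sup>2 - d n m * d n (Suc (Suc m)) = 1"
proof (induction m)
  case (Suc m)
  then show ?case by (simp add: power2_eq_square algebra_simps)
qed (simp add: power2_eq_square algebra_simps)

definition d_ratio :: "nat \<Rightarrow> nat \<Rightarrow> real" where
  "d_ratio n m = d n m / d n (Suc m)"

lemma d_ratio_le_1: "1 \<le> n \<Longrightarrow> d_ratio n m \<le> 1"
  using d_ge_1_less_Suc[of n m] by (simp add: d_ratio_def)

lemma incseq_d_ratio:
  assumes n: "1 \<le> n"
  shows "incseq (d_ratio n)"
proof (rule incseq_SucI)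
  fix m
  have pos: "0 < d n (Suc m)" "0 < d n (Suc (Suc m))"
    using d_ge_1_less_Suc[OF n, of "Suc m"] d_ge_1_less_Suc[OF n, of "Suc (Suc m)"] by simp_all
  have "d n m * d n (Suc (Suc m)) \<le> d n (Suc m) * d n (Suc m)"
    using d_cassini[of n m] by (simp add: power2_eq_square)
  then have "real_of_int (d n m) * d n (Suc (Suc m)) \<le> real_of_int (d n (Suc m)) * d n (Suc m)"
    by (metis of_int_le_iff of_int_mult)
  moreover have frac_mono: "x / y \<le> y / z" if "0 < y" "0 < z" "x * z \<le> y * y" for x y z :: real
    using that by (simp add: divide_simps)
  ultimately show "d_ratio n m \<le> d_ratio n (Suc m)"
    unfolding d_ratio_def using pos by (intro frac_mono) (simp_all del: d.simps)
qed

theorem lemma4p4: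
  fixes n :: nat
  assumes "n \<ge> 1"
  shows "\<exists>A \<in> Toep n. \<forall>f \<in> Fock n. A f = Phi n f"
proof -
  obtain L where "d_ratio n \<longlonglongrightarrow> L"
    using incseq_convergent[OF incseq_d_ratio[OF assms] allI[OF d_ratio_le_1[OF assms]]] by blast
  then have "(\<lambda>m. complex_of_real (d_ratio n m)) \<longlonglongrightarrow> complex_of_real L"
    by (rule tendsto_of_real)
  then have "in_Toep n (diag_op (\<lambda>m. complex_of_real (d_ratio n m)))"
    by (rule in_Toep_diag_op_convergent)
  moreover have "diag_op (\<lambda>m. complex_of_real (d_ratio n m)) = Phi n"
    by (simp add: fun_eq_iff diag_op_def Phi_def d_ratio_def)
  ultimately show ?thesis unfolding in_Toep_def by simp
qed

end
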